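(* Let $G$ be a graph whose maximum degree is $3$ and with $|V(G)|>4$. Then $\mu(G)\leq 2$.
   Context: Multi-graphs have no self-loops; the skeleton of a multi-graph is its underlying simple graph. Each edge $e$ between $u$ and $v$ consists of two half-edges $e_u$ and $e_v$. A half-edge colouring is a function $c$ from the set of half-edges to $\mathbb{N}_0$; each edge $e$ also gets a weight $w(e)\in\mathbb{C}$. The weight of a perfect matching $P$ is $\prod_{e\in P}w(e)$. A vertex colouring is a map $vc:V\to\mathbb{N}_0$; it filters out the subgraph consisting of all edges $e$ (between $u,v$) with $c(e_u)=vc(u)$ and $c(e_v)=vc(v)$ (with the same weights). The weight of $vc$ is the sum of the weights of all perfect matchings of this filtered subgraph; $vc$ is feasible if the filtered subgraph has at least one perfect matching (an infeasible colouring has weight $0$). An edge-coloured edge-weighted multi-graph is GHZ if every feasible monochromatic vertex colouring has weight $1$ and every non-monochromatic vertex colouring has weight $0$; its dimension is the number of feasible monochromatic vertex colourings. For a simple graph $G$, the matching index $\mu(G)$ is the maximum (possibly $\infty$) of the dimension over all GHZ edge-coloured edge-weighted multi-graphs whose skeleton is $G$. *)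

theory Defs
  imports Complex_Main "HOL-Library.Extended_Nat"
begin

definition simple_graph :: "'v set \<Rightarrow> 'v set set \<Rightarrow> bool" where
  "simple_graph V E \<longleftrightarrow> finite V \<and> (\<forall>e\<in>E. e \<subseteq> V \<and> card e = 2)"

definition degree :: "'v set set \<Rightarrow> 'v \<Rightarrow> nat" where
  "degree E v = card {e\<in>E. v \<in> e}"

definition max_degree :: "'v set \<Rightarrow> 'v set set \<Rightarrow> nat" where
  "max_degree V E = Max (degree E ` V)"

text \<open>The half-edge of e at endpoint u has colour c e u; the edge has weight w e.\<close>

definition endset :: "(nat \<Rightarrow> 'v \<times> 'v) \<Rightarrow> nat \<Rightarrow> 'v set" where
  "endset ends e = {fst (ends e), snd (ends e)}"

definition multigraph :: "'v set \<Rightarrow> nat set \<Rightarrow> (nat \<Rightarrow> 'v \<times> 'v) \<Rightarrow> bool" where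
  "multigraph V ME ends \<longleftrightarrow> finite ME \<and>
     (\<forall>e\<in>ME. fst (ends e) \<in> V \<and> snd (ends e) \<in> V \<and> fst (ends e) \<noteq> snd (ends e))"

definition skeleton :: "nat set \<Rightarrow> (nat \<Rightarrow> 'v \<times> 'v) \<Rightarrow> 'v set set" where
  "skeleton ME ends = endset ends ` ME"

definition perfect_matching :: "'v set \<Rightarrow> (nat \<Rightarrow> 'v \<times> 'v) \<Rightarrow> nat set \<Rightarrow> nat set \<Rightarrow> bool" where
  "perfect_matching V ends F P \<longleftrightarrow> P \<subseteq> F \<and> (\<forall>v\<in>V. \<exists>!e. e \<in> P \<and> v \<in> endset ends e)"

definition filtered :: "nat set \<Rightarrow> (nat \<Rightarrow> 'v \<times> 'v) \<Rightarrow> (nat \<Rightarrow> 'v \<Rightarrow> nat) \<Rightarrow> ('v \<Rightarrow> nat) \<Rightarrow> nat set" where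
  "filtered ME ends c vc = {e\<in>ME. c e (fst (ends e)) = vc (fst (ends e)) \<and> c e (snd (ends e)) = vc (snd (ends e))}"

definition vc_weight :: "'v set \<Rightarrow> nat set \<Rightarrow> (nat \<Rightarrow> 'v \<times> 'v) \<Rightarrow> (nat \<Rightarrow> 'v \<Rightarrow> nat)
    \<Rightarrow> (nat \<Rightarrow> complex) \<Rightarrow> ('v \<Rightarrow> nat) \<Rightarrow> complex" where
  "vc_weight V ME ends c w vc =
     (\<Sum>P\<in>{P. perfect_matching V ends (filtered ME ends c vc) P}. \<Prod>e\<in>P. w e)"

definition feasible :: "'v set \<Rightarrow> nat set \<Rightarrow> (nat \<Rightarrow> 'v \<times> 'v) \<Rightarrow> (nat \<Rightarrow> 'v \<Rightarrow> nat) \<Rightarrow> ('v \<Rightarrow> nat) \<Rightarrow> bool" where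
  "feasible V ME ends c vc \<longleftrightarrow> (\<exists>P. perfect_matching V ends (filtered ME ends c vc) P)"

definition monochromatic :: "'v set \<Rightarrow> ('v \<Rightarrow> nat) \<Rightarrow> bool" where
  "monochromatic V vc \<longleftrightarrow> (\<forall>u\<in>V. \<forall>v\<in>V. vc u = vc v)"

definition GHZ :: "'v set \<Rightarrow> nat set \<Rightarrow> (nat \<Rightarrow> 'v \<times> 'v) \<Rightarrow> (nat \<Rightarrow> 'v \<Rightarrow> nat) \<Rightarrow> (nat \<Rightarrow> complex) \<Rightarrow> bool" where
  "GHZ V ME ends c w \<longleftrightarrow>
     (\<forall>vc. monochromatic V vc \<and> feasible V ME ends c vc \<longrightarrow> vc_weight V ME ends c w vc = 1) \<and>
     (\<forall>vc. \<not> monochromatic V vc \<longrightarrow> vc_weight V ME ends c w vc = 0)"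

text \<open>Monochromatic vertex colourings are identified by their colour k (as functions on V).\<close>
definition dimension :: "'v set \<Rightarrow> nat set \<Rightarrow> (nat \<Rightarrow> 'v \<times> 'v) \<Rightarrow> (nat \<Rightarrow> 'v \<Rightarrow> nat) \<Rightarrow> enat" where
  "dimension V ME ends c = (if finite {k. feasible V ME ends c (\<lambda>_. k)}
      then enat (card {k. feasible V ME ends c (\<lambda>_. k)}) else \<infinity>)"

definition matching_index :: "'v set \<Rightarrow> 'v set set \<Rightarrow> enat" where
  "matching_index V E = (SUP (ME, ends, c, w) \<in>
      {(ME, ends, c, w). multigraph V ME ends \<and> skeleton ME ends = E \<and> GHZ V ME ends c w}.
      dimension V ME ends c)"

end

theory Submission
  imports Defs "HOL-Computational_Algebra.Polynomial"
begin

(* Suppose three colours k1, k2, k3 are feasible. Expanding the GHZ conditions at a vertex v of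
   degree at most 3, for colourings that are constant outside v and three vertices containing its
   neighbours, yields an identity beta_j F_lm + gamma_l G_jm = rho_j delta_jlm between 3-tensors,
   which is impossible; hence between two vertices at most one pair of colours carries nonzero
   weight. Consequently, for each k, the pairs joined by edges coloured k at both ends form a
   perfect matching, i.e. a fixed-point-free involution h_k, and no other pairs carry weight.
   With more than four vertices, any three such involutions admit a partition of V into proper
   parts A, B, C closed under h_1, h_2, h_3 respectively (cut the alternating cycle of h_1 and h_2
   at the ends of one or two chords of h_3). Colouring A, B, C by k1, k2, k3 gives a colouring
   that is not monochromatic but has nonzero weight, contradicting GHZ. *)

section \<open>Matchings of induced submultigraphs\<close>

definition induced_matchings :: "'v set \<Rightarrow> nat set \<Rightarrow> (nat \<Rightarrow> 'v \<times> 'v) \<Rightarrow> (nat \<Rightarrow> 'v \<Rightarrow> nat)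
    \<Rightarrow> ('v \<Rightarrow> nat) \<Rightarrow> nat set set" where
  "induced_matchings U ME ends c vc =
     {P. perfect_matching U ends (filtered {e\<in>ME. endset ends e \<subseteq> U} ends c vc) P}"

definition induced_weight :: "'v set \<Rightarrow> nat set \<Rightarrow> (nat \<Rightarrow> 'v \<times> 'v) \<Rightarrow> (nat \<Rightarrow> 'v \<Rightarrow> nat)
    \<Rightarrow> (nat \<Rightarrow> complex) \<Rightarrow> ('v \<Rightarrow> nat) \<Rightarrow> complex" where
  "induced_weight U ME ends c w vc = (\<Sum>P\<in>induced_matchings U ME ends c vc. \<Prod>e\<in>P. w e)"

definition pair_weight :: "nat set \<Rightarrow> (nat \<Rightarrow> 'v \<times> 'v) \<Rightarrow> (nat \<Rightarrow> 'v \<Rightarrow> nat) \<Rightarrow> (nat \<Rightarrow> complex)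
    \<Rightarrow> 'v \<Rightarrow> 'v \<Rightarrow> nat \<Rightarrow> nat \<Rightarrow> complex" where
  "pair_weight ME ends c w u x k i = (\<Sum>e\<in>{e\<in>ME. endset ends e = {u,x} \<and> c e u = k \<and> c e x = i}. w e)"

lemma induced_matchings_iff:
  "P \<in> induced_matchings U ME ends c vc \<longleftrightarrow>
     P \<subseteq> filtered ME ends c vc \<and> (\<forall>e\<in>P. endset ends e \<subseteq> U) \<and> (\<forall>v\<in>U. \<exists>!e. e \<in> P \<and> v \<in> endset ends e)"
  by (auto simp: induced_matchings_def perfect_matching_def filtered_def)

lemma finite_induced_matchings: "finite ME \<Longrightarrow> finite (induced_matchings U ME ends c vc)"
  by (rule finite_subset[of _ "Pow ME"]) (auto simp: induced_matchings_iff filtered_def)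

lemma induced_matchings_cong:
  "(\<And>x. x \<in> U \<Longrightarrow> vc x = vc' x) \<Longrightarrow> induced_matchings U ME ends c vc = induced_matchings U ME ends c vc'"
  by (intro set_eqI) (auto simp: induced_matchings_iff filtered_def endset_def subset_iff)

lemma induced_weight_cong:
  "(\<And>x. x \<in> U \<Longrightarrow> vc x = vc' x) \<Longrightarrow> induced_weight U ME ends c w vc = induced_weight U ME ends c w vc'"
  unfolding induced_weight_def by (metis induced_matchings_cong)

lemma induced_weight_empty: "induced_weight {} ME ends c w vc = 1"
proof -
  have "induced_matchings {} ME ends c vc = {{}}"
    by (auto simp: induced_matchings_iff endset_def)
  thus ?thesis by (simp add: induced_weight_def)
qed

lemma induced_matchings_insert:
  assumes P: "P \<in> induced_matchings (U - endset ends e) ME ends c vc"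
    and e: "e \<in> filtered ME ends c vc" "endset ends e \<subseteq> U"
  shows "insert e P \<in> induced_matchings U ME ends c vc"
  unfolding induced_matchings_iff
proof (intro conjI ballI)
  show "insert e P \<subseteq> filtered ME ends c vc" "\<And>e'. e' \<in> insert e P \<Longrightarrow> endset ends e' \<subseteq> U"
    using P e by (auto simp: induced_matchings_iff)
  fix v assume "v \<in> U"
  show "\<exists>!e'. e' \<in> insert e P \<and> v \<in> endset ends e'"
  proof (cases "v \<in> endset ends e")
    case True
    with P show ?thesis by (auto simp: induced_matchings_iff)
  next
    case False
    with P \<open>v \<in> U\<close> have "\<exists>!e'. e' \<in> P \<and> v \<in> endset ends e'"
      by (simp add: induced_matchings_iff)
    with False show ?thesis by blast
  qed
qed

lemma induced_matchings_remove:
  assumes P: "P \<in> induced_matchings U ME ends c vc" and e: "e \<in> P"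
  shows "P - {e} \<in> induced_matchings (U - endset ends e) ME ends c vc"
proof -
  have disjoint: "endset ends e' \<inter> endset ends e = {}" if "e' \<in> P" "e' \<noteq> e" for e'
    using P e that unfolding induced_matchings_iff by (metis IntE disjoint_iff subsetD)
  show ?thesis
    using P e disjoint unfolding induced_matchings_iff by (auto; blast)
qed

lemma induced_matchings_containing:
  assumes e: "e \<in> filtered ME ends c vc" "endset ends e \<subseteq> U"
  shows "{P\<in>induced_matchings U ME ends c vc. e \<in> P}
    = insert e ` induced_matchings (U - endset ends e) ME ends c vc"
proof
  show "insert e ` induced_matchings (U - endset ends e) ME ends c vc
      \<subseteq> {P\<in>induced_matchings U ME ends c vc. e \<in> P}"
    using e induced_matchings_insert by fastforce
  show "{P\<in>induced_matchings U ME ends c vc. e \<in> P}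
      \<subseteq> insert e ` induced_matchings (U - endset ends e) ME ends c vc"
  proof
    fix P assume "P \<in> {P\<in>induced_matchings U ME ends c vc. e \<in> P}"
    hence "P = insert e (P - {e})" "P - {e} \<in> induced_matchings (U - endset ends e) ME ends c vc"
      using induced_matchings_remove by auto
    thus "P \<in> insert e ` induced_matchings (U - endset ends e) ME ends c vc" by blast
  qed
qed

lemma induced_weight_expand_edges:
  assumes ME: "finite ME" and u: "u \<in> U"
  shows "induced_weight U ME ends c w vc =
    (\<Sum>e\<in>{e\<in>filtered ME ends c vc. endset ends e \<subseteq> U \<and> u \<in> endset ends e}.
       w e * induced_weight (U - endset ends e) ME ends c w vc)"
proof -
  define Eu where "Eu = {e\<in>filtered ME ends c vc. endset ends e \<subseteq> U \<and> u \<in> endset ends e}"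
  let ?M = "\<lambda>U. induced_matchings U ME ends c vc"
  define through where "through e = {P\<in>?M U. e \<in> P}" for e
  have finEu: "finite Eu"
    using ME by (auto simp: Eu_def filtered_def)
  have cover: "?M U = (\<Union>e\<in>Eu. through e)"
    using u by (fastforce simp: Eu_def through_def induced_matchings_iff)
  have disjoint: "through e \<inter> through e' = {}" if "e \<in> Eu" "e' \<in> Eu" "e \<noteq> e'" for e e'
    using that u by (auto simp: Eu_def through_def induced_matchings_iff)
  have through: "through e = insert e ` ?M (U - endset ends e)" if "e \<in> Eu" for e
    unfolding through_def by (rule induced_matchings_containing) (use that in \<open>simp_all add: Eu_def\<close>)
  have fresh: "e \<notin> P" if "e \<in> Eu" "P \<in> ?M (U - endset ends e)" for e P
    using that by (auto simp: Eu_def induced_matchings_iff)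
  have "induced_weight U ME ends c w vc = (\<Sum>e\<in>Eu. \<Sum>P\<in>through e. \<Prod>e\<in>P. w e)"
    unfolding induced_weight_def cover
    by (rule sum.UNION_disjoint) (use finEu ME disjoint in \<open>auto simp: through_def finite_induced_matchings\<close>)
  also have "\<dots> = (\<Sum>e\<in>Eu. \<Sum>P\<in>?M (U - endset ends e). \<Prod>e\<in>insert e P. w e)"
  proof (rule sum.cong[OF refl])
    fix e assume e: "e \<in> Eu"
    have "inj_on (insert e) (?M (U - endset ends e))"
      using fresh[OF e] by (auto simp: inj_on_def) (metis insert_ident)+
    thus "(\<Sum>P\<in>through e. \<Prod>e\<in>P. w e) = (\<Sum>P\<in>?M (U - endset ends e). \<Prod>e\<in>insert e P. w e)"
      by (simp add: through[OF e] sum.reindex)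
  qed
  also have "\<dots> = (\<Sum>e\<in>Eu. w e * induced_weight (U - endset ends e) ME ends c w vc)"
  proof (rule sum.cong[OF refl])
    fix e assume e: "e \<in> Eu"
    have "finite P" if "P \<in> ?M (U - endset ends e)" for P
      using that ME by (auto simp: induced_matchings_iff filtered_def intro: finite_subset)
    thus "(\<Sum>P\<in>?M (U - endset ends e). \<Prod>e\<in>insert e P. w e) = w e * induced_weight (U - endset ends e) ME ends c w vc"
      using fresh[OF e] by (simp add: induced_weight_def sum_distrib_left)
  qed
  finally show ?thesis by (simp add: Eu_def)
qed

lemma induced_weight_expand:
  assumes ME: "finite ME" and loopless: "\<forall>e\<in>ME. fst (ends e) \<noteq> snd (ends e)"
    and U: "finite U" and u: "u \<in> U"
  shows "induced_weight U ME ends c w vc = (\<Sum>x\<in>U-{u}.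
           pair_weight ME ends c w u x (vc u) (vc x) * induced_weight (U - {u,x}) ME ends c w vc)"
proof -
  define Eu where "Eu = {e\<in>filtered ME ends c vc. endset ends e \<subseteq> U \<and> u \<in> endset ends e}"
  define other where "other e = (if fst (ends e) = u then snd (ends e) else fst (ends e))" for e
  have Eu_ends: "endset ends e = {u, other e}" "other e \<in> U - {u}" if "e \<in> Eu" for e
    using that loopless by (auto simp: Eu_def filtered_def endset_def other_def)
  have finEu: "finite Eu"
    using ME by (auto simp: Eu_def filtered_def)
  have slice: "{e\<in>Eu. other e = x} = {e\<in>ME. endset ends e = {u,x} \<and> c e u = vc u \<and> c e x = vc x}"
    if x: "x \<in> U - {u}" for x
    using x u loopless by (auto simp: Eu_def filtered_def endset_def other_def doubleton_eq_iff)
  have "induced_weight U ME ends c w vc = (\<Sum>e\<in>Eu. w e * induced_weight (U - endset ends e) ME ends c w vc)"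
    unfolding Eu_def by (rule induced_weight_expand_edges[OF ME u])
  also have "\<dots> = (\<Sum>e\<in>Eu. w e * induced_weight (U - {u, other e}) ME ends c w vc)"
    by (rule sum.cong) (simp_all add: Eu_ends)
  also have "\<dots> = (\<Sum>x\<in>U-{u}. \<Sum>e\<in>{e\<in>Eu. other e = x}. w e * induced_weight (U - {u, other e}) ME ends c w vc)"
    by (rule sum.group[symmetric]) (use finEu U Eu_ends in auto)
  also have "\<dots> = (\<Sum>x\<in>U-{u}.
           pair_weight ME ends c w u x (vc u) (vc x) * induced_weight (U - {u,x}) ME ends c w vc)"
  proof (rule sum.cong[OF refl])
    fix x assume x: "x \<in> U - {u}"
    have "(\<Sum>e\<in>{e\<in>Eu. other e = x}. w e * induced_weight (U - {u, other e}) ME ends c w vc)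
        = (\<Sum>e\<in>{e\<in>Eu. other e = x}. w e) * induced_weight (U - {u,x}) ME ends c w vc"
      by (simp add: sum_distrib_right)
    thus "(\<Sum>e\<in>{e\<in>Eu. other e = x}. w e * induced_weight (U - {u, other e}) ME ends c w vc)
        = pair_weight ME ends c w u x (vc u) (vc x) * induced_weight (U - {u,x}) ME ends c w vc"
      by (simp add: slice[OF x] pair_weight_def)
  qed
  finally show ?thesis .
qed

lemma pair_weight_commute: "pair_weight ME ends c w u x k i = pair_weight ME ends c w x u i k"
  unfolding pair_weight_def by (rule sum.cong) (auto simp: insert_commute)

lemma pair_weight_nonzero_imp_skeleton:
  "pair_weight ME ends c w u x k i \<noteq> 0 \<Longrightarrow> {u,x} \<in> skeleton ME ends"
  unfolding pair_weight_def skeleton_def by (metis (mono_tags, lifting) image_eqI mem_Collect_eq sum.neutral)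

lemma multigraph_induced_edges_eq: "multigraph V ME ends \<Longrightarrow> {e\<in>ME. endset ends e \<subseteq> V} = ME"
  by (auto simp: multigraph_def endset_def)

lemma induced_weight_eq_vc_weight:
  "multigraph V ME ends \<Longrightarrow> induced_weight V ME ends c w vc = vc_weight V ME ends c w vc"
  by (simp add: induced_weight_def induced_matchings_def vc_weight_def multigraph_induced_edges_eq)

lemma feasible_iff_induced_matchings:
  "multigraph V ME ends \<Longrightarrow> feasible V ME ends c vc \<longleftrightarrow> induced_matchings V ME ends c vc \<noteq> {}"
  by (simp add: feasible_def induced_matchings_def multigraph_induced_edges_eq)

section \<open>Linear algebra\<close>

lemma diagonal_tensor_split_product_zero:
  fixes \<beta> \<gamma> \<rho> :: "'k \<Rightarrow> 'a::idom" and F G :: "'k \<Rightarrow> 'k \<Rightarrow> 'a"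
  assumes split: "\<And>j l m. j \<in> K \<Longrightarrow> l \<in> K \<Longrightarrow> m \<in> K \<Longrightarrow>
      \<beta> j * F l m + \<gamma> l * G j m = (if j = l \<and> l = m then \<rho> j else 0)"
    and \<rho>: "\<rho> j \<noteq> 0" and jl: "j \<in> K" "l \<in> K" "j \<noteq> l"
  shows "\<beta> l * \<gamma> l = 0"
proof -
  have jjj: "\<beta> j * F j j + \<gamma> j * G j j = \<rho> j" and ljj: "\<beta> l * F j j + \<gamma> j * G l j = 0"
    and jlj: "\<beta> j * F l j + \<gamma> l * G j j = 0" and llj: "\<beta> l * F l j + \<gamma> l * G l j = 0"
    using split[of j j j] split[of l j j] split[of j l j] split[of l l j] jl by simp_all
  have "\<beta> l * \<gamma> l * \<rho> j = \<beta> j * \<gamma> l * (\<beta> l * F j j + \<gamma> j * G l j)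
      + \<beta> l * \<gamma> j * (\<beta> j * F l j + \<gamma> l * G j j) - \<beta> j * \<gamma> j * (\<beta> l * F l j + \<gamma> l * G l j)"
    unfolding jjj[symmetric] by (simp add: algebra_simps)
  also have "\<dots> = 0"
    by (simp only: ljj jlj llj) simp
  finally show ?thesis using \<rho> by simp
qed

lemma diagonal_tensor_not_split:
  fixes \<beta> \<gamma> \<rho> :: "'k \<Rightarrow> 'a::idom" and F G :: "'k \<Rightarrow> 'k \<Rightarrow> 'a"
  assumes K: "finite K" "2 < card K"
    and split: "\<And>j l m. j \<in> K \<Longrightarrow> l \<in> K \<Longrightarrow> m \<in> K \<Longrightarrow>
      \<beta> j * F l m + \<gamma> l * G j m = (if j = l \<and> l = m then \<rho> j else 0)"
    and \<rho>: "\<And>j. j \<in> K \<Longrightarrow> \<rho> j \<noteq> 0"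
  shows False
proof -
  define Z\<beta> where "Z\<beta> = {l\<in>K. \<beta> l = 0}"
  define Z\<gamma> where "Z\<gamma> = {l\<in>K. \<gamma> l = 0}"
  have "K \<subseteq> Z\<beta> \<union> Z\<gamma>"
  proof
    fix l assume l: "l \<in> K"
    have "\<not> card K \<le> Suc 0" using K by simp
    then obtain j where "j \<in> K" "j \<noteq> l"
      using l K(1) card_le_Suc0_iff_eq by blast
    thus "l \<in> Z\<beta> \<union> Z\<gamma>"
      using diagonal_tensor_split_product_zero[OF split \<rho>] l by (simp add: Z\<beta>_def Z\<gamma>_def)
  qed
  moreover have "card Z\<beta> \<le> 1"
  proof -
    have "j = l" if "j \<in> K" "l \<in> K" "\<beta> j = 0" "\<beta> l = 0" for j l
      using split[of j j j] split[of l l l] split[of l j l] \<rho>[of j] \<rho>[of l] that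
      by (cases "j = l") auto
    thus ?thesis using K unfolding One_nat_def Z\<beta>_def by (subst card_le_Suc0_iff_eq) auto
  qed
  moreover have "card Z\<gamma> \<le> 1"
  proof -
    have "j = l" if "j \<in> K" "l \<in> K" "\<gamma> j = 0" "\<gamma> l = 0" for j l
      using split[of j j j] split[of l l l] split[of j l l] \<rho>[of j] \<rho>[of l] that
      by (cases "j = l") auto
    thus ?thesis using K unfolding One_nat_def Z\<gamma>_def by (subst card_le_Suc0_iff_eq) auto
  qed
  ultimately have "card K \<le> 2"
    using card_mono[of "Z\<beta> \<union> Z\<gamma>" K] card_Un_le[of Z\<beta> Z\<gamma>] K(1)
    by (simp add: Z\<beta>_def Z\<gamma>_def)
  thus False using K by simp
qed

lemma torus_avoids_two_hyperplanes:
  fixes a b :: "'k \<Rightarrow> complex"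
  assumes K: "finite K" and a: "\<exists>y\<in>K. a y \<noteq> 0" and b: "\<exists>y\<in>K. b y \<noteq> 0"
  shows "\<exists>s. (\<forall>y\<in>K. s y \<noteq> 0) \<and> (\<Sum>y\<in>K. a y * s y) \<noteq> 0 \<and> (\<Sum>y\<in>K. b y * s y) \<noteq> 0"
proof -
  obtain f :: "'k \<Rightarrow> nat" where f: "inj_on f K"
    using finite_imp_inj_to_nat_seg[OF K] by blast
  \<comment> \<open>With \<open>s y = z ^ f y\<close> both sums become values of nonzero polynomials in \<open>z\<close>.\<close>
  define poly_of where "poly_of a = (\<Sum>y\<in>K. monom (a y) (f y))" for a :: "'k \<Rightarrow> complex"
  have poly_of_eval: "poly (poly_of a) z = (\<Sum>y\<in>K. a y * z ^ f y)" for a z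
    by (simp add: poly_of_def poly_sum poly_monom)
  have poly_of_nonzero: "poly_of a \<noteq> 0" if nonzero: "\<exists>y\<in>K. a y \<noteq> 0" for a
  proof -
    obtain y0 where y0: "y0 \<in> K" "a y0 \<noteq> 0" using nonzero by blast
    have "coeff (poly_of a) (f y0) = (\<Sum>y\<in>K. if y = y0 then a y else 0)"
      unfolding poly_of_def coeff_sum coeff_monom
      by (rule sum.cong) (use f y0 in \<open>auto simp: inj_on_eq_iff\<close>)
    also have "\<dots> = a y0" using K y0 by simp
    finally show ?thesis using y0 by (metis coeff_0)
  qed
  define bad where "bad = {z. poly (poly_of a) z = 0} \<union> {z. poly (poly_of b) z = 0} \<union> {0}"
  have "finite bad"
    unfolding bad_def using poly_roots_finite poly_of_nonzero a b by blast
  then obtain z :: complex where z: "z \<notin> bad"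
    using ex_new_if_finite[OF infinite_UNIV_char_0] by blast
  show ?thesis
    using z by (intro exI[of _ "\<lambda>y. z ^ f y"]) (simp add: bad_def poly_of_eval)
qed

lemma linear_form_vanishes_on_torus:
  fixes u :: "'k \<Rightarrow> complex"
  assumes K: "finite K" and p: "p \<in> K" "p' \<in> K" "p \<noteq> p'" and u: "u p \<noteq> 0" "u p' \<noteq> 0"
  shows "\<exists>t. (\<forall>x\<in>K. t x \<noteq> 0) \<and> (\<Sum>x\<in>K. t x * u x) = 0"
proof -
  define R where "R = (\<Sum>x\<in>K - {p} - {p'}. u x)"
  obtain \<alpha> :: complex where \<alpha>: "\<alpha> \<noteq> 0" "\<alpha> * u p + R \<noteq> 0"
  proof (cases "u p + R = 0")
    case True
    show ?thesis
    proof (rule that[of 2])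
      show "2 * u p + R \<noteq> 0" using True u by (metis add.assoc add.right_neutral mult_2)
    qed simp
  qed (use that[of 1] in simp)
  define \<mu> where "\<mu> = - (\<alpha> * u p + R) / u p'"
  define t where "t x = (if x = p then \<alpha> else if x = p' then \<mu> else 1)" for x
  have "(\<Sum>x\<in>K. t x * u x) = t p * u p + (t p' * u p' + (\<Sum>x\<in>K - {p} - {p'}. t x * u x))"
    using K p by (simp add: sum.remove[of K p] sum.remove[of "K - {p}" p'])
  also have "\<dots> = \<alpha> * u p + \<mu> * u p' + R"
    unfolding R_def using p by (simp add: t_def)
  also have "\<dots> = 0"
    using u by (simp add: \<mu>_def)
  finally show ?thesis
    using \<alpha> u by (intro exI[of _ t]) (auto simp: t_def \<mu>_def)
qed

lemma bilinear_form_vanishes_on_torus_rows: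
  fixes A :: "'k \<Rightarrow> 'k \<Rightarrow> complex"
  assumes K: "finite K" and p: "p \<in> K" "p' \<in> K" "p \<noteq> p'"
    and rows: "\<exists>y\<in>K. A p y \<noteq> 0" "\<exists>y\<in>K. A p' y \<noteq> 0"
  shows "\<exists>t s. (\<forall>x\<in>K. t x \<noteq> 0) \<and> (\<forall>y\<in>K. s y \<noteq> 0) \<and> (\<Sum>x\<in>K. \<Sum>y\<in>K. t x * s y * A x y) = 0"
proof -
  obtain s where s: "\<forall>y\<in>K. s y \<noteq> 0" "(\<Sum>y\<in>K. A p y * s y) \<noteq> 0" "(\<Sum>y\<in>K. A p' y * s y) \<noteq> 0"
    using torus_avoids_two_hyperplanes[OF K rows] by blast
  obtain t where t: "\<forall>x\<in>K. t x \<noteq> 0" "(\<Sum>x\<in>K. t x * (\<Sum>y\<in>K. A x y * s y)) = 0"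
    using linear_form_vanishes_on_torus[OF K p, of "\<lambda>x. \<Sum>y\<in>K. A x y * s y"] s by blast
  have "(\<Sum>x\<in>K. \<Sum>y\<in>K. t x * s y * A x y) = (\<Sum>x\<in>K. t x * (\<Sum>y\<in>K. A x y * s y))"
    by (simp add: sum_distrib_left algebra_simps)
  thus ?thesis using s t by auto
qed

lemma bilinear_form_vanishes_on_torus:
  fixes A :: "'k \<Rightarrow> 'k \<Rightarrow> complex"
  assumes K: "finite K" and pq: "p \<in> K" "q \<in> K" "p' \<in> K" "q' \<in> K" "(p, q) \<noteq> (p', q')"
    and nonzero: "A p q \<noteq> 0" "A p' q' \<noteq> 0"
  shows "\<exists>t s. (\<forall>x\<in>K. t x \<noteq> 0) \<and> (\<forall>y\<in>K. s y \<noteq> 0) \<and> (\<Sum>x\<in>K. \<Sum>y\<in>K. t x * s y * A x y) = 0"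
proof (cases "p = p'")
  case False
  show ?thesis
    by (rule bilinear_form_vanishes_on_torus_rows[OF K pq(1,3) False]) (use nonzero pq in auto)
next
  case True
  then obtain t s where ts: "\<forall>x\<in>K. t x \<noteq> 0" "\<forall>y\<in>K. s y \<noteq> 0"
     "(\<Sum>x\<in>K. \<Sum>y\<in>K. t x * s y * A y x) = 0"
    using bilinear_form_vanishes_on_torus_rows[OF K pq(2,4), of "\<lambda>x y. A y x"] nonzero pq by auto
  have "(\<Sum>x\<in>K. \<Sum>y\<in>K. s x * t y * A x y) = (\<Sum>x\<in>K. \<Sum>y\<in>K. t x * s y * A y x)"
    by (subst sum.swap) (simp add: algebra_simps)
  thus ?thesis using ts by (intro exI[of _ s] exI[of _ t]) simp
qed

lemma double_sum_split3:
  fixes t s :: "'k \<Rightarrow> 'a::comm_ring"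
  shows "(\<Sum>k\<in>K. \<Sum>i\<in>K. t k * s i * (A k i * X + B k * Y i + C k * Z i)) =
    (\<Sum>k\<in>K. \<Sum>i\<in>K. t k * s i * A k i) * X + (\<Sum>k\<in>K. t k * B k) * (\<Sum>i\<in>K. s i * Y i)
      + (\<Sum>k\<in>K. t k * C k) * (\<Sum>i\<in>K. s i * Z i)"
proof -
  have "(\<Sum>k\<in>K. \<Sum>i\<in>K. t k * s i * (A k i * X + B k * Y i + C k * Z i)) =
      (\<Sum>k\<in>K. \<Sum>i\<in>K. t k * s i * A k i * X) + (\<Sum>k\<in>K. \<Sum>i\<in>K. (t k * B k) * (s i * Y i))
        + (\<Sum>k\<in>K. \<Sum>i\<in>K. (t k * C k) * (s i * Z i))"
    by (simp add: sum.distrib algebra_simps)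
  also have "(\<Sum>k\<in>K. \<Sum>i\<in>K. t k * s i * A k i * X) = (\<Sum>k\<in>K. \<Sum>i\<in>K. t k * s i * A k i) * X"
    by (simp add: sum_distrib_right)
  also have "(\<Sum>k\<in>K. \<Sum>i\<in>K. (t k * B k) * (s i * Y i)) = (\<Sum>k\<in>K. t k * B k) * (\<Sum>i\<in>K. s i * Y i)"
    by (simp add: sum_product)
  also have "(\<Sum>k\<in>K. \<Sum>i\<in>K. (t k * C k) * (s i * Z i)) = (\<Sum>k\<in>K. t k * C k) * (\<Sum>i\<in>K. s i * Z i)"
    by (simp add: sum_product)
  finally show ?thesis .
qed

lemma delta_double_sum:
  fixes t s :: "'k \<Rightarrow> 'a::comm_ring_1"
  assumes K: "finite K" and j: "j \<in> K"
  shows "(\<Sum>k\<in>K. \<Sum>i\<in>K. t k * s i * (if k = i \<and> i = j \<and> P then 1 else 0)) = (if P then t j * s j else 0)"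
proof -
  have "(\<Sum>i\<in>K. t k * s i * (if k = i \<and> i = j \<and> P then 1 else 0))
      = (\<Sum>i\<in>K. if i = j then (if k = j \<and> P then t k * s j else 0) else 0)" for k
    by (rule sum.cong) auto
  hence "(\<Sum>k\<in>K. \<Sum>i\<in>K. t k * s i * (if k = i \<and> i = j \<and> P then 1 else 0))
      = (\<Sum>k\<in>K. if k = j then (if P then t j * s j else 0) else 0)"
    using j K by (intro sum.cong) auto
  thus ?thesis using j K by simp
qed

section \<open>Partitions invariant under three involutions\<close>

definition fixfree_involution :: "'v set \<Rightarrow> ('v \<Rightarrow> 'v) \<Rightarrow> bool" where
  "fixfree_involution V h \<longleftrightarrow> (\<forall>x\<in>V. h x \<in> V \<and> h x \<noteq> x \<and> h (h x) = x)"

lemma fixfree_involutionD: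
  assumes "fixfree_involution V h" "x \<in> V"
  shows "h x \<in> V" "h x \<noteq> x" "h (h x) = x"
  using assms by (auto simp: fixfree_involution_def)

lemma fixfree_involution_Diff_closed:
  assumes h: "fixfree_involution V h" and S: "h ` S \<subseteq> S"
  shows "h ` (V - S) \<subseteq> V - S"
proof (rule image_subsetI)
  fix x assume x: "x \<in> V - S"
  have "h x \<notin> S"
  proof
    assume "h x \<in> S"
    hence "h (h x) \<in> S" using S by blast
    thus False using x fixfree_involutionD(3)[OF h] by simp
  qed
  thus "h x \<in> V - S" using x fixfree_involutionD(1)[OF h] by blast
qed

definition alternate :: "('v \<Rightarrow> 'v) \<Rightarrow> ('v \<Rightarrow> 'v) \<Rightarrow> nat \<Rightarrow> 'v \<Rightarrow> 'v" where
  "alternate h1 h2 i = (if even i then h1 else h2)"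

lemma alternate_fixfree_involution:
  "fixfree_involution V h1 \<Longrightarrow> fixfree_involution V h2 \<Longrightarrow> fixfree_involution V (alternate h1 h2 i)"
  by (simp add: alternate_def)

lemma alternate_parity: "even i = even j \<Longrightarrow> alternate h1 h2 i x = alternate h1 h2 j x"
  by (simp add: alternate_def)

primrec alternating_walk :: "('v \<Rightarrow> 'v) \<Rightarrow> ('v \<Rightarrow> 'v) \<Rightarrow> 'v \<Rightarrow> nat \<Rightarrow> 'v" where
  "alternating_walk h1 h2 x0 0 = x0"
| "alternating_walk h1 h2 x0 (Suc i) = alternate h1 h2 i (alternating_walk h1 h2 x0 i)"

definition alternating_cycle :: "'v set \<Rightarrow> ('v \<Rightarrow> 'v) \<Rightarrow> ('v \<Rightarrow> 'v) \<Rightarrow> nat \<Rightarrow> (nat \<Rightarrow> 'v) \<Rightarrow> bool" where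
  "alternating_cycle V h1 h2 n u \<longleftrightarrow> (\<forall>i. u (Suc i) = alternate h1 h2 i (u i)) \<and> (\<forall>i. u (i + n) = u i)
     \<and> even n \<and> 0 < n \<and> bij_betw u {..<n} V"

context
  fixes V :: "'v set" and h1 h2 :: "'v \<Rightarrow> 'v" and x0 :: 'v
  assumes h1: "fixfree_involution V h1" and h2: "fixfree_involution V h2" and x0: "x0 \<in> V"
begin

abbreviation "walk \<equiv> alternating_walk h1 h2 x0"

lemma walk_in: "walk i \<in> V"
  by (induction i) (simp_all add: x0 fixfree_involutionD(1)[OF alternate_fixfree_involution[OF h1 h2]])

lemma walk_step_back: "alternate h1 h2 i (walk (Suc i)) = walk i"
  using fixfree_involutionD(3)[OF alternate_fixfree_involution[OF h1 h2] walk_in[of i]] by simp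

lemma walk_shift_backward: "walk (a + t) = walk (b + t) \<Longrightarrow> even a = even b \<Longrightarrow> walk a = walk b"
proof (induction t)
  case (Suc t)
  have "walk (a + t) = alternate h1 h2 (a + t) (walk (Suc (a + t)))"
    by (rule walk_step_back[symmetric])
  also have "\<dots> = alternate h1 h2 (a + t) (walk (Suc (b + t)))"
    using Suc.prems(1) by simp
  also have "\<dots> = alternate h1 h2 (b + t) (walk (Suc (b + t)))"
    by (rule alternate_parity) (use Suc.prems in simp)
  also have "\<dots> = walk (b + t)"
    by (rule walk_step_back)
  finally show ?case using Suc by simp
qed simp

lemma walk_shift_forward: "walk a = walk b \<Longrightarrow> even a = even b \<Longrightarrow> walk (a + t) = walk (b + t)"
proof (induction t)
  case (Suc t)
  have "walk (a + Suc t) = alternate h1 h2 (a + t) (walk (b + t))" using Suc by simp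
  also have "\<dots> = alternate h1 h2 (b + t) (walk (b + t))"
    by (rule alternate_parity) (use Suc.prems in simp)
  finally show ?case by simp
qed simp

lemma walk_no_odd_return: "walk i \<noteq> walk (i + 2 * t + 1)"
proof (induction t arbitrary: i)
  case 0
  show ?case using fixfree_involutionD(2)[OF alternate_fixfree_involution[OF h1 h2] walk_in[of i]]
    by (simp add: eq_commute)
next
  case (Suc t)
  show ?case
  proof
    assume "walk i = walk (i + 2 * Suc t + 1)"
    hence "walk (Suc i) = alternate h1 h2 i (walk (Suc (i + 2 * t + 2)))" by simp
    also have "\<dots> = alternate h1 h2 (i + 2 * t + 2) (walk (Suc (i + 2 * t + 2)))"
      by (rule alternate_parity) simp
    also have "\<dots> = walk (Suc i + 2 * t + 1)"
      by (simp only: walk_step_back) simp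
    finally show False using Suc.IH[of "Suc i"] by simp
  qed
qed

lemma walk_returns:
  assumes "finite V" shows "\<exists>P>0. even P \<and> walk P = walk 0"
proof -
  have "\<not> inj_on (\<lambda>i. walk (2 * i)) {..card V}"
  proof
    assume "inj_on (\<lambda>i. walk (2 * i)) {..card V}"
    hence "card {..card V} \<le> card V"
      using card_inj_on_le[of _ _ V] walk_in assms by blast
    thus False by simp
  qed
  then obtain i j where ij: "i < j" "walk (2 * i) = walk (2 * j)"
    unfolding inj_on_def by (metis linorder_neqE_nat)
  have "walk (0 + 2 * i) = walk (2 * (j - i) + 2 * i)"
    using ij by (simp add: algebra_simps)
  hence "walk 0 = walk (2 * (j - i))" by (rule walk_shift_backward) simp
  thus ?thesis using ij by (intro exI[of _ "2 * (j - i)"]) auto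
qed

lemma walk_mod_period:
  assumes P: "even P" "walk P = walk 0"
  shows "walk i = walk (i mod P)"
proof -
  have "walk (j + P * k) = walk j" for j k
  proof (induction k)
    case (Suc k)
    have "walk (j + P * Suc k) = walk (P + (j + P * k))" by (simp add: algebra_simps)
    also have "\<dots> = walk (0 + (j + P * k))" by (rule walk_shift_forward) (use P in simp_all)
    finally show ?case using Suc by simp
  qed simp
  from this[of "i mod P" "i div P"] show ?thesis by simp
qed

lemma walk_range_closed:
  assumes P: "even P" "0 < P" "walk P = walk 0" and x: "x \<in> range walk"
  shows "h1 x \<in> range walk" "h2 x \<in> range walk"
proof -
  obtain i where i: "x = walk i" using x by blast
  have "x = walk (Suc (i + P - 1))"
    using i walk_mod_period[OF P(1,3), of i] walk_mod_period[OF P(1,3), of "i + P"] P(2) by simp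
  hence "alternate h1 h2 (i + P - 1) x = walk (i + P - 1)"
    using walk_step_back by simp
  moreover have "alternate h1 h2 (i + P - 1) x = alternate h1 h2 (Suc i) x"
    using P(1,2) by (intro alternate_parity) auto
  moreover have "alternate h1 h2 i x = walk (Suc i)" using i by simp
  ultimately have "alternate h1 h2 i x \<in> range walk" "alternate h1 h2 (Suc i) x \<in> range walk"
    by (metis rangeI)+
  thus "h1 x \<in> range walk" "h2 x \<in> range walk"
    by (cases "even i"; simp add: alternate_def)+
qed

lemma walk_inj_on:
  assumes least: "\<And>Q. 0 < Q \<Longrightarrow> even Q \<Longrightarrow> walk Q = walk 0 \<Longrightarrow> P \<le> Q"
  shows "inj_on walk {..<P}"
proof -
  have distinct: "walk i \<noteq> walk j" if ij: "i < j" "j < P" for i j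
  proof (cases "even (j - i)")
    case True
    show ?thesis
    proof
      assume "walk i = walk j"
      hence "walk (0 + i) = walk ((j - i) + i)" using ij by simp
      hence "walk 0 = walk (j - i)" by (rule walk_shift_backward) (use True in simp)
      thus False using least[of "j - i"] True ij by simp
    qed
  next
    case False
    then obtain t where "j - i = 2 * t + 1" by (metis oddE)
    hence "j = i + 2 * t + 1" using ij by simp
    thus ?thesis using walk_no_odd_return by simp
  qed
  show ?thesis
  proof (rule inj_onI)
    fix i j assume "i \<in> {..<P}" "j \<in> {..<P}" "walk i = walk j"
    thus "i = j" using distinct[of i j] distinct[of j i] by (cases i j rule: linorder_cases) auto
  qed
qed

lemma alternating_cycle_exists:
  assumes fin: "finite V"
    and connected: "\<And>S. S \<subseteq> V \<Longrightarrow> S \<noteq> {} \<Longrightarrow> h1 ` S \<subseteq> S \<Longrightarrow> h2 ` S \<subseteq> S \<Longrightarrow> S = V"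
  shows "alternating_cycle V h1 h2 (card V) walk"
proof -
  define P where "P = (LEAST P. 0 < P \<and> even P \<and> walk P = walk 0)"
  have "0 < P \<and> even P \<and> walk P = walk 0"
    unfolding P_def by (rule LeastI_ex) (use walk_returns[OF fin] in blast)
  hence P: "0 < P" "even P" "walk P = walk 0" by auto
  have P_least: "P \<le> Q" if "0 < Q" "even Q" "walk Q = walk 0" for Q
    unfolding P_def by (rule Least_le) (use that in blast)
  have inj: "inj_on walk {..<P}" by (rule walk_inj_on[OF P_least])
  have "range walk = V"
  proof (rule connected)
    show "range walk \<subseteq> V" "range walk \<noteq> {}" using walk_in by auto
    show "h1 ` range walk \<subseteq> range walk" "h2 ` range walk \<subseteq> range walk"
      using walk_range_closed[OF P(2,1,3)] by blast+
  qed
  moreover have "walk ` {..<P} = range walk"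
  proof
    show "range walk \<subseteq> walk ` {..<P}"
    proof
      fix x assume "x \<in> range walk"
      then obtain i where "x = walk (i mod P)" using walk_mod_period[OF P(2,3)] by blast
      thus "x \<in> walk ` {..<P}" using P(1) by simp
    qed
  qed blast
  ultimately have bij: "bij_betw walk {..<P} V"
    using inj by (simp add: bij_betw_def)
  hence "card V = P" by (simp add: bij_betw_same_card[symmetric])
  moreover have "walk (i + P) = walk i" for i
    using walk_shift_forward[of P 0 i] P by (simp add: add.commute)
  ultimately show ?thesis
    using bij P by (simp add: alternating_cycle_def)
qed

end

lemma periodic_mod:
  fixes f :: "nat \<Rightarrow> 'a"
  assumes "\<And>i. f (i + n) = f i"
  shows "f i = f (i mod n)"
proof -
  have "f (j + n * k) = f j" for j k
  proof (induction k)
    case (Suc k)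
    have "f (j + n * Suc k) = f ((j + n * k) + n)" by (simp add: algebra_simps)
    thus ?case using Suc assms by simp
  qed simp
  from this[of "i mod n" "i div n"] show ?thesis by simp
qed

lemma alternating_cycleD:
  assumes "alternating_cycle V h1 h2 n u"
  shows "u (Suc i) = alternate h1 h2 i (u i)" "u (i + n) = u i" "even n" "0 < n" "bij_betw u {..<n} V"
  using assms unfolding alternating_cycle_def by blast+

lemma alternating_cycle_in:
  assumes cyc: "alternating_cycle V h1 h2 n u" shows "u i \<in> V"
proof -
  have "u i = u (i mod n)" by (rule periodic_mod) (rule alternating_cycleD(2)[OF cyc])
  moreover have "i mod n < n" using alternating_cycleD(4)[OF cyc] by simp
  ultimately show ?thesis using alternating_cycleD(5)[OF cyc] by (auto simp: bij_betw_def)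
qed

lemma alternating_cycle_card: "alternating_cycle V h1 h2 n u \<Longrightarrow> card V = n"
  using bij_betw_same_card[OF alternating_cycleD(5)] by fastforce

lemma alternating_cycle_shift:
  assumes cyc: "alternating_cycle V h1 h2 n u"
  shows "alternating_cycle V (alternate h1 h2 e) (alternate h1 h2 (Suc e)) n (\<lambda>j. u (e + j))"
proof -
  let ?u = "\<lambda>j. u (e + j)"
  note D = alternating_cycleD[OF cyc]
  have step: "?u (Suc j) = alternate (alternate h1 h2 e) (alternate h1 h2 (Suc e)) j (?u j)" for j
    using D(1)[of "e + j"] by (simp add: alternate_def)
  have per: "?u (j + n) = ?u j" for j
    using D(2)[of "e + j"] by (simp add: add.assoc)
  have "V \<subseteq> ?u ` {..<n}"
  proof
    fix x assume "x \<in> V"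
    have "e \<le> n * e" using D(4) by simp
    hence idx: "e + (k + n * e - e) = k + n * e" for k by linarith
    obtain k where "x = u k" using \<open>x \<in> V\<close> D(5) by (auto simp: bij_betw_def)
    also have "\<dots> = u (k + n * e)"
      using periodic_mod[of u n, OF D(2)] by (metis mod_mult_self2)
    also have "\<dots> = ?u (k + n * e - e)"
      by (simp only: idx)
    also have "\<dots> = ?u ((k + n * e - e) mod n)"
      by (rule periodic_mod) (rule per)
    finally show "x \<in> ?u ` {..<n}" using D(4) by simp
  qed
  moreover have "?u ` {..<n} \<subseteq> V" using alternating_cycle_in[OF cyc] by blast
  ultimately have img: "?u ` {..<n} = V" by blast
  hence "inj_on ?u {..<n}"
    using alternating_cycle_card[OF cyc] by (intro eq_card_imp_inj_on) simp_all
  thus ?thesis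
    using img step per D(3,4) by (simp add: alternating_cycle_def bij_betw_def)
qed

lemma alternating_cycle_segment_closed:
  assumes cyc: "alternating_cycle V h1 h2 n u"
    and h1: "fixfree_involution V h1" and h2: "fixfree_involution V h2"
    and parity: "even lo = even hi"
  shows "alternate h1 h2 lo ` u ` {lo..<hi} \<subseteq> u ` {lo..<hi}"
proof clarify
  fix j assume j: "j \<in> {lo..<hi}"
  show "alternate h1 h2 lo (u j) \<in> u ` {lo..<hi}"
  proof (cases "even j = even lo")
    case True
    hence "alternate h1 h2 lo (u j) = alternate h1 h2 j (u j)"
      by (intro alternate_parity) simp
    also have "\<dots> = u (Suc j)"
      by (simp add: alternating_cycleD(1)[OF cyc])
    finally have "alternate h1 h2 lo (u j) = u (Suc j)" .
    moreover have "Suc j < hi" using j True parity by (cases "Suc j = hi") auto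
    ultimately show ?thesis using j by auto
  next
    case False
    then obtain k where k: "j = Suc k" "lo \<le> k" using j by (cases j) (auto simp: le_Suc_eq)
    have "alternate h1 h2 lo (u j) = alternate h1 h2 k (u j)"
      using False k by (intro alternate_parity) simp
    also have "\<dots> = alternate h1 h2 k (alternate h1 h2 k (u k))"
      by (simp add: k alternating_cycleD(1)[OF cyc])
    also have "\<dots> = u k"
      using fixfree_involutionD(3)[OF alternate_fixfree_involution[OF h1 h2] alternating_cycle_in[OF cyc]] .
    finally show ?thesis using j k by auto
  qed
qed

definition invariant_partition :: "'v set \<Rightarrow> ('v \<Rightarrow> 'v) \<Rightarrow> ('v \<Rightarrow> 'v) \<Rightarrow> ('v \<Rightarrow> 'v)
    \<Rightarrow> 'v set \<Rightarrow> 'v set \<Rightarrow> 'v set \<Rightarrow> bool" where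
  "invariant_partition V h1 h2 h3 A B C \<longleftrightarrow> A \<union> B \<union> C = V \<and> A \<inter> B = {} \<and> A \<inter> C = {} \<and> B \<inter> C = {}
     \<and> h1 ` A \<subseteq> A \<and> h2 ` B \<subseteq> B \<and> h3 ` C \<subseteq> C \<and> A \<noteq> V \<and> B \<noteq> V \<and> C \<noteq> V"

lemma invariant_partition_image:
  assumes bij: "bij_betw u {..<n} V" and cover: "IA \<union> IB \<union> IC = {..<n}"
    and disjoint: "IA \<inter> IB = {}" "IA \<inter> IC = {}" "IB \<inter> IC = {}"
    and closed: "h1 ` u ` IA \<subseteq> u ` IA" "h2 ` u ` IB \<subseteq> u ` IB" "h3 ` u ` IC \<subseteq> u ` IC"
    and IC: "0 \<in> IC" "card IC < n"
  shows "invariant_partition V h1 h2 h3 (u ` IA) (u ` IB) (u ` IC)"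
proof -
  have inj: "inj_on u {..<n}" and img: "u ` {..<n} = V" using bij by (auto simp: bij_betw_def)
  have sub: "IA \<subseteq> {..<n}" "IB \<subseteq> {..<n}" "IC \<subseteq> {..<n}" using cover by auto
  have "u ` IA \<inter> u ` IB = {}" "u ` IA \<inter> u ` IC = {}" "u ` IB \<inter> u ` IC = {}"
    using inj_on_image_Int[OF inj] sub disjoint by (metis image_empty)+
  moreover have "u ` IA \<union> u ` IB \<union> u ` IC = V" using img cover by (metis image_Un)
  moreover have "u ` IC \<noteq> V"
    using card_image_le[of IC u] finite_subset[OF sub(3)] IC bij_betw_same_card[OF bij] by auto
  moreover have "u 0 \<in> V" "u 0 \<in> u ` IC" using IC img by auto
  ultimately show ?thesis
    using closed unfolding invariant_partition_def by blast
qed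

(* Removing the ends 0 and d of an odd chord leaves two paths with an even number of vertices,
   perfectly matched by h2 and h1 respectively; crossing chords are used the same way. *)
lemma invariant_partition_odd_chord:
  assumes cyc: "alternating_cycle V h1 h2 n u" and h1: "fixfree_involution V h1"
    and h2: "fixfree_involution V h2" and h3: "fixfree_involution V h3"
    and n: "4 < n" and chord: "h3 (u 0) = u d" "odd d" "d < n"
  shows "\<exists>A B C. invariant_partition V h1 h2 h3 A B C"
proof -
  note segment = alternating_cycle_segment_closed[OF cyc h1 h2]
  have "invariant_partition V h1 h2 h3 (u ` {Suc d..<n}) (u ` {1..<d}) (u ` {0, d})"
  proof (rule invariant_partition_image[OF alternating_cycleD(5)[OF cyc]])
    show "{Suc d..<n} \<union> {1..<d} \<union> {0, d} = {..<n}" using chord by auto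
    show "h1 ` u ` {Suc d..<n} \<subseteq> u ` {Suc d..<n}"
      using segment[of "Suc d" n] chord alternating_cycleD(3)[OF cyc] by (simp add: alternate_def)
    show "h2 ` u ` {1..<d} \<subseteq> u ` {1..<d}"
      using segment[of 1 d] chord by (simp add: alternate_def)
    have "h3 (u d) = u 0"
      using fixfree_involutionD(3)[OF h3 alternating_cycle_in[OF cyc, of 0]] chord(1) by simp
    thus "h3 ` u ` {0, d} \<subseteq> u ` {0, d}" using chord(1) by auto
    show "card {0, d} < n" using n by (simp add: card_insert_if)
  qed auto
  thus ?thesis by blast
qed

lemma invariant_partition_crossing_chords:
  assumes cyc: "alternating_cycle V h1 h2 n u" and h1: "fixfree_involution V h1"
    and h2: "fixfree_involution V h2" and h3: "fixfree_involution V h3"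
    and n: "4 < n" and chords: "h3 (u 0) = u e3" "h3 (u e2) = u e4"
    and order: "0 < e2" "e2 < e3" "e3 < e4" "e4 < n" and parity: "odd e2" "even e3" "odd e4"
  shows "\<exists>A B C. invariant_partition V h1 h2 h3 A B C"
proof -
  note segment = alternating_cycle_segment_closed[OF cyc h1 h2]
  define IA where "IA = {Suc e2..<e3} \<union> {Suc e4..<n}"
  define IB where "IB = {1..<e2} \<union> {Suc e3..<e4}"
  have "invariant_partition V h1 h2 h3 (u ` IA) (u ` IB) (u ` {0, e2, e3, e4})"
  proof (rule invariant_partition_image[OF alternating_cycleD(5)[OF cyc]])
    show "IA \<union> IB \<union> {0, e2, e3, e4} = {..<n}" using order by (auto simp: IA_def IB_def)
    show "IA \<inter> IB = {}" "IA \<inter> {0, e2, e3, e4} = {}" "IB \<inter> {0, e2, e3, e4} = {}"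
      using order by (auto simp: IA_def IB_def)
    have "h1 ` u ` {Suc e2..<e3} \<subseteq> u ` {Suc e2..<e3}" "h1 ` u ` {Suc e4..<n} \<subseteq> u ` {Suc e4..<n}"
      using segment[of "Suc e2" e3] segment[of "Suc e4" n] parity alternating_cycleD(3)[OF cyc]
      by (simp_all add: alternate_def)
    thus "h1 ` u ` IA \<subseteq> u ` IA" unfolding IA_def image_Un by blast
    have "h2 ` u ` {1..<e2} \<subseteq> u ` {1..<e2}" "h2 ` u ` {Suc e3..<e4} \<subseteq> u ` {Suc e3..<e4}"
      using segment[of 1 e2] segment[of "Suc e3" e4] parity by (simp_all add: alternate_def)
    thus "h2 ` u ` IB \<subseteq> u ` IB" unfolding IB_def image_Un by blast
    have "h3 (u e3) = u 0" "h3 (u e4) = u e2"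
      using fixfree_involutionD(3)[OF h3 alternating_cycle_in[OF cyc, of 0]]
        fixfree_involutionD(3)[OF h3 alternating_cycle_in[OF cyc, of e2]] chords by simp_all
    thus "h3 ` u ` {0, e2, e3, e4} \<subseteq> u ` {0, e2, e3, e4}" using chords by auto
    show "card {0, e2, e3, e4} < n"
      using n card_length[of "[0, e2, e3, e4]"] by simp
  qed simp
  thus ?thesis by blast
qed

lemma invariant_partition_alternate:
  assumes "\<exists>A B C. invariant_partition V (alternate h1 h2 e) (alternate h1 h2 (Suc e)) h3 A B C"
  shows "\<exists>A B C. invariant_partition V h1 h2 h3 A B C"
proof -
  obtain A B C where part: "invariant_partition V (alternate h1 h2 e) (alternate h1 h2 (Suc e)) h3 A B C"
    using assms by blast
  show ?thesis
  proof (cases "even e")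
    case True
    thus ?thesis using part by (auto simp: alternate_def)
  next
    case False
    hence "invariant_partition V h1 h2 h3 B A C"
      using part unfolding invariant_partition_def alternate_def by auto
    thus ?thesis by blast
  qed
qed

lemma alternating_cycle_chords:
  assumes cyc: "alternating_cycle V h1 h2 n u" and h3: "fixfree_involution V h3"
  obtains \<sigma> where "\<And>i. i < n \<Longrightarrow> \<sigma> i < n \<and> u (\<sigma> i) = h3 (u i) \<and> \<sigma> i \<noteq> i \<and> \<sigma> (\<sigma> i) = i"
proof
  define \<sigma> where "\<sigma> i = the_inv_into {..<n} u (h3 (u i))" for i
  have inj: "inj_on u {..<n}" and img: "u ` {..<n} = V"
    using alternating_cycleD(5)[OF cyc] by (auto simp: bij_betw_def)
  have \<sigma>: "\<sigma> i < n" "u (\<sigma> i) = h3 (u i)" if "i < n" for i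
  proof -
    have "h3 (u i) \<in> u ` {..<n}"
      using img fixfree_involutionD(1)[OF h3 alternating_cycle_in[OF cyc]] by simp
    thus "\<sigma> i < n" "u (\<sigma> i) = h3 (u i)"
      unfolding \<sigma>_def using the_inv_into_into[OF inj] f_the_inv_into_f[OF inj] by auto
  qed
  fix i assume i: "i < n"
  have "u (\<sigma> (\<sigma> i)) = u i"
    using \<sigma>[OF i] \<sigma>[OF \<sigma>(1)[OF i]] fixfree_involutionD(3)[OF h3 alternating_cycle_in[OF cyc]] by simp
  hence "\<sigma> (\<sigma> i) = i"
    using inj \<sigma> i unfolding inj_on_def by blast
  moreover have "\<sigma> i \<noteq> i"
    using \<sigma>[OF i] fixfree_involutionD(2)[OF h3 alternating_cycle_in[OF cyc]] by metis
  ultimately show "\<sigma> i < n \<and> u (\<sigma> i) = h3 (u i) \<and> \<sigma> i \<noteq> i \<and> \<sigma> (\<sigma> i) = i"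
    using \<sigma>[OF i] by blast
qed

lemma shortest_even_chord:
  fixes \<sigma> :: "nat \<Rightarrow> nat"
  assumes \<sigma>: "\<And>i. i < n \<Longrightarrow> \<sigma> i < n \<and> \<sigma> i \<noteq> i \<and> \<sigma> (\<sigma> i) = i"
    and even: "\<And>i. i < n \<Longrightarrow> even (i + \<sigma> i)" and n: "0 < n"
  obtains p q where "Suc p < q" "q < n" "\<sigma> p = q" "\<sigma> q = p" "\<sigma> (Suc p) < p \<or> q < \<sigma> (Suc p)"
proof -
  define chords where "chords = {(p, q). p < q \<and> q < n \<and> \<sigma> p = q}"
  have "(min 0 (\<sigma> 0), max 0 (\<sigma> 0)) \<in> chords"
    using \<sigma>[OF n] by (auto simp: chords_def min_def max_def)
  then obtain p q where pq: "(p, q) \<in> chords" and shortest: "\<And>p' q'. (p', q') \<in> chords \<Longrightarrow> q - p \<le> q' - p'"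
    using ex_has_least_nat[of "\<lambda>c. c \<in> chords" _ "\<lambda>(p, q). q - p"] by fastforce
  have pq': "p < q" "q < n" "\<sigma> p = q" "\<sigma> q = p" using pq \<sigma> by (auto simp: chords_def)
  have "q \<noteq> Suc p" using even[of p] pq' by auto
  hence Suc_p: "Suc p < q" using pq' by simp
  define r where "r = \<sigma> (Suc p)"
  have r: "r \<noteq> Suc p" "r \<noteq> p" "r \<noteq> q" "\<sigma> r = Suc p"
    using \<sigma>[of "Suc p"] \<sigma>[of p] Suc_p pq' by (auto simp: r_def)
  have "\<not> (Suc p < r \<and> r < q)"
  proof
    assume "Suc p < r \<and> r < q"
    hence "q - p \<le> r - Suc p" using shortest[of "Suc p" r] pq' by (simp add: chords_def r_def)
    thus False using \<open>Suc p < r \<and> r < q\<close> by linarith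
  qed
  hence "r < p \<or> q < r" using r by auto
  thus thesis using that Suc_p pq' by (simp add: r_def)
qed

lemma invariant_partition_odd_chord_at:
  assumes cyc: "alternating_cycle V h1 h2 n u" and h1: "fixfree_involution V h1"
    and h2: "fixfree_involution V h2" and h3: "fixfree_involution V h3"
    and n: "4 < n" and chord: "p < q" "q < n" "h3 (u p) = u q" "odd (q - p)"
  shows "\<exists>A B C. invariant_partition V h1 h2 h3 A B C"
proof -
  have "h3 (u (p + 0)) = u (p + (q - p))" "odd (q - p)" "q - p < n" using chord by simp_all
  hence "\<exists>A B C. invariant_partition V (alternate h1 h2 p) (alternate h1 h2 (Suc p)) h3 A B C"
    by (rule invariant_partition_odd_chord[OF alternating_cycle_shift[OF cyc]
          alternate_fixfree_involution[OF h1 h2] alternate_fixfree_involution[OF h1 h2] h3 n])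
  thus ?thesis by (rule invariant_partition_alternate)
qed

lemma invariant_partition_crossing_chords_at:
  assumes cyc: "alternating_cycle V h1 h2 n u" and h1: "fixfree_involution V h1"
    and h2: "fixfree_involution V h2" and h3: "fixfree_involution V h3"
    and n: "4 < n" and chords: "h3 (u e0) = u e2" "h3 (u e1) = u e3"
    and order: "e0 < e1" "e1 < e2" "e2 < e3" "e3 < n"
    and parity: "odd (e1 - e0)" "even (e2 - e0)" "odd (e3 - e0)"
  shows "\<exists>A B C. invariant_partition V h1 h2 h3 A B C"
proof -
  have "h3 (u (e0 + 0)) = u (e0 + (e2 - e0))" "h3 (u (e0 + (e1 - e0))) = u (e0 + (e3 - e0))"
    using chords order by simp_all
  moreover have "0 < e1 - e0" "e1 - e0 < e2 - e0" "e2 - e0 < e3 - e0" "e3 - e0 < n"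
    using order by auto
  ultimately have "\<exists>A B C. invariant_partition V (alternate h1 h2 e0) (alternate h1 h2 (Suc e0)) h3 A B C"
    using parity by (rule invariant_partition_crossing_chords[OF alternating_cycle_shift[OF cyc]
          alternate_fixfree_involution[OF h1 h2] alternate_fixfree_involution[OF h1 h2] h3 n])
  thus ?thesis by (rule invariant_partition_alternate)
qed

lemma invariant_partition_even_chords:
  assumes cyc: "alternating_cycle V h1 h2 n u" and h1: "fixfree_involution V h1"
    and h2: "fixfree_involution V h2" and h3: "fixfree_involution V h3" and n: "4 < n"
    and \<sigma>: "\<And>i. i < n \<Longrightarrow> \<sigma> i < n \<and> u (\<sigma> i) = h3 (u i) \<and> \<sigma> i \<noteq> i \<and> \<sigma> (\<sigma> i) = i"
    and even: "\<And>i. i < n \<Longrightarrow> even (i + \<sigma> i)"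
  shows "\<exists>A B C. invariant_partition V h1 h2 h3 A B C"
proof -
  have "\<And>i. i < n \<Longrightarrow> \<sigma> i < n \<and> \<sigma> i \<noteq> i \<and> \<sigma> (\<sigma> i) = i" "0 < n" using \<sigma> n by auto
  then obtain p q where pq: "Suc p < q" "q < n" "\<sigma> p = q" "\<sigma> q = p" "\<sigma> (Suc p) < p \<or> q < \<sigma> (Suc p)"
    using shortest_even_chord[of n \<sigma>] even by blast
  define r where "r = \<sigma> (Suc p)"
  have r: "r < n" "\<sigma> r = Suc p" using \<sigma>[of "Suc p"] pq by (simp_all add: r_def)
  have parity: "even (Suc p + r)" "even (p + q)"
    using even[of "Suc p"] even[of p] pq by (simp_all add: r_def)
  have chords: "h3 (u p) = u q" "h3 (u (Suc p)) = u r" "h3 (u r) = u (Suc p)"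
    using \<sigma>[of p] \<sigma>[of "Suc p"] \<sigma>[of r] r pq by (simp_all add: r_def)
  show ?thesis
  proof (cases "q < r")
    case True
    show ?thesis
      by (rule invariant_partition_crossing_chords_at[OF cyc h1 h2 h3 n, of p q "Suc p" r])
        (use True pq r parity chords in auto)
  next
    case False
    hence "r < p" using pq by (simp add: r_def)
    show ?thesis
      by (rule invariant_partition_crossing_chords_at[OF cyc h1 h2 h3 n, of r "Suc p" p q])
        (use \<open>r < p\<close> pq parity chords in auto)
  qed
qed

lemma invariant_partition_cycle:
  assumes cyc: "alternating_cycle V h1 h2 n u" and h1: "fixfree_involution V h1"
    and h2: "fixfree_involution V h2" and h3: "fixfree_involution V h3" and n: "4 < n"
  shows "\<exists>A B C. invariant_partition V h1 h2 h3 A B C"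
proof -
  obtain \<sigma> where \<sigma>: "\<And>i. i < n \<Longrightarrow> \<sigma> i < n \<and> u (\<sigma> i) = h3 (u i) \<and> \<sigma> i \<noteq> i \<and> \<sigma> (\<sigma> i) = i"
    using alternating_cycle_chords[OF cyc h3] by blast
  show ?thesis
  proof (cases "\<exists>i<n. odd (i + \<sigma> i)")
    case True
    then obtain i where i: "i < n" "odd (i + \<sigma> i)" by blast
    define p q where "p = min i (\<sigma> i)" and "q = max i (\<sigma> i)"
    have "p < q" "q < n" "h3 (u p) = u q" "odd (q - p)"
      using \<sigma>[OF i(1)] \<sigma>[of "\<sigma> i"] i fixfree_involutionD(3)[OF h3 alternating_cycle_in[OF cyc]]
      by (auto simp: p_def q_def min_def max_def)
    thus ?thesis by (rule invariant_partition_odd_chord_at[OF cyc h1 h2 h3 n])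
  next
    case False
    thus ?thesis using invariant_partition_even_chords[OF cyc h1 h2 h3 n \<sigma>] by blast
  qed
qed

lemma invariant_partition_exists:
  assumes fin: "finite V" and V: "4 < card V" and h1: "fixfree_involution V h1"
    and h2: "fixfree_involution V h2" and h3: "fixfree_involution V h3"
  shows "\<exists>A B C. invariant_partition V h1 h2 h3 A B C"
proof (cases "\<exists>S. S \<subseteq> V \<and> S \<noteq> {} \<and> S \<noteq> V \<and> h1 ` S \<subseteq> S \<and> h2 ` S \<subseteq> S")
  case True
  then obtain S where S: "S \<subseteq> V" "S \<noteq> {}" "S \<noteq> V" "h1 ` S \<subseteq> S" "h2 ` S \<subseteq> S" by blast
  have "invariant_partition V h1 h2 h3 S (V - S) {}"
    using S fixfree_involution_Diff_closed[OF h2 S(5)] V by (auto simp: invariant_partition_def)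
  thus ?thesis by blast
next
  case False
  obtain x0 where "x0 \<in> V" using V by fastforce
  hence "alternating_cycle V h1 h2 (card V) (alternating_walk h1 h2 x0)"
    using alternating_cycle_exists[OF h1 h2 _ fin] False by blast
  thus ?thesis using invariant_partition_cycle h1 h2 h3 V by blast
qed

definition partition_colouring :: "'v set \<Rightarrow> 'v set \<Rightarrow> nat \<Rightarrow> nat \<Rightarrow> nat \<Rightarrow> 'v \<Rightarrow> nat" where
  "partition_colouring A B k1 k2 k3 x = (if x \<in> A then k1 else if x \<in> B then k2 else k3)"

lemma partition_colouring_compatible:
  assumes part: "invariant_partition V (h k1) (h k2) (h k3) A B C" and k: "distinct [k1, k2, k3]"
    and x: "x \<in> V"
  shows "partition_colouring A B k1 k2 k3 (h (partition_colouring A B k1 k2 k3 x) x)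
    = partition_colouring A B k1 k2 k3 x"
proof -
  have cover: "A \<union> B \<union> C = V" and disjoint: "A \<inter> B = {}" "A \<inter> C = {}" "B \<inter> C = {}"
    and closed: "h k1 ` A \<subseteq> A" "h k2 ` B \<subseteq> B" "h k3 ` C \<subseteq> C"
    using part by (simp_all add: invariant_partition_def)
  consider "x \<in> A" | "x \<in> B" | "x \<in> C" using x cover by blast
  thus ?thesis
  proof cases
    case 1 thus ?thesis using closed(1) by (auto simp: partition_colouring_def)
  next
    case 2 thus ?thesis using closed(2) disjoint by (auto simp: partition_colouring_def)
  next
    case 3 thus ?thesis using closed(3) disjoint by (auto simp: partition_colouring_def)
  qed
qed

lemma partition_colouring_not_monochromatic:
  assumes part: "invariant_partition V h1 h2 h3 A B C" and k: "distinct [k1, k2, k3]"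
  shows "\<not> monochromatic V (partition_colouring A B k1 k2 k3)"
proof
  assume mono: "monochromatic V (partition_colouring A B k1 k2 k3)"
  have cover: "A \<union> B \<union> C = V" and disjoint: "A \<inter> B = {}" "A \<inter> C = {}" "B \<inter> C = {}"
    and proper: "A \<noteq> V" "B \<noteq> V" "C \<noteq> V"
    using part by (simp_all add: invariant_partition_def)
  then obtain x0 where x0: "x0 \<in> V" by blast
  have same: "partition_colouring A B k1 k2 k3 x = partition_colouring A B k1 k2 k3 x0" if "x \<in> V" for x
    using mono x0 that unfolding monochromatic_def by blast
  consider "x0 \<in> A" | "x0 \<in> B" | "x0 \<in> C" using x0 cover by blast
  thus False
  proof cases
    case 1
    have "x \<in> A" if "x \<in> V" for x
      using same[OF that] 1 k that by (auto simp: partition_colouring_def split: if_splits)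
    thus False using proper(1) cover by blast
  next
    case 2
    have "x \<in> B" if "x \<in> V" for x
      using same[OF that] 2 k disjoint that by (auto simp: partition_colouring_def split: if_splits)
    thus False using proper(2) cover by blast
  next
    case 3
    have "x \<in> C" if "x \<in> V" for x
      using same[OF that] 3 k disjoint cover that by (auto simp: partition_colouring_def split: if_splits)
    thus False using proper(3) cover by blast
  qed
qed

section \<open>Subcubic GHZ graphs\<close>

definition neighbours :: "'v set set \<Rightarrow> 'v \<Rightarrow> 'v set" where
  "neighbours E v = {x. {v, x} \<in> E}"

lemma neighbours_subset: "simple_graph V E \<Longrightarrow> neighbours E v \<subseteq> V - {v}"
  by (force simp: simple_graph_def neighbours_def)

lemma card_neighbours_le_max_degree:
  assumes G: "simple_graph V E" and v: "v \<in> V"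
  shows "card (neighbours E v) \<le> max_degree V E"
proof -
  have finE: "finite E"
    using G unfolding simple_graph_def by (meson PowI finite_Pow_iff finite_subset subsetI)
  have "inj_on (\<lambda>x. {v, x}) (neighbours E v)"
    by (auto simp: inj_on_def doubleton_eq_iff)
  moreover have "(\<lambda>x. {v, x}) ` neighbours E v \<subseteq> {e\<in>E. v \<in> e}"
    by (auto simp: neighbours_def)
  ultimately have "card (neighbours E v) \<le> Defs.degree E v"
    unfolding Defs.degree_def using finE by (intro card_inj_on_le) auto
  also have "\<dots> \<le> max_degree V E"
    unfolding max_degree_def using G v by (intro Max_ge) (auto simp: simple_graph_def)
  finally show ?thesis .
qed

lemma obtain_cover_pair:
  assumes X: "finite X" "3 \<le> card X" and Y: "Y \<subseteq> X" "card Y \<le> 2"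
  obtains b d r where "b \<in> X" "d \<in> X" "r \<in> X" "b \<noteq> d" "r \<noteq> b" "r \<noteq> d" "Y \<subseteq> {b, d}"
proof -
  have finY: "finite Y" using X Y finite_subset by blast
  have "2 - card Y \<le> card (X - Y)" using card_Diff_subset[OF finY Y(1)] X Y by simp
  then obtain Z where Z: "Z \<subseteq> X - Y" "card Z = 2 - card Y" "finite Z" by (rule obtain_subset_with_card_n)
  have "card (Y \<union> Z) = 2" using card_Un_disjoint[OF finY Z(3)] Z Y by auto
  then obtain b d where bd: "Y \<union> Z = {b, d}" "b \<noteq> d" by (auto simp: card_2_iff)
  have "\<not> X \<subseteq> {b, d}" using card_mono[of "{b, d}" X] X bd(2) by auto
  then obtain r where "r \<in> X" "r \<notin> {b, d}" by blast
  thus thesis using that bd Z(1) Y(1) by blast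
qed

definition star_colouring :: "'v \<Rightarrow> 'v \<Rightarrow> 'v \<Rightarrow> 'v \<Rightarrow> nat \<Rightarrow> nat \<Rightarrow> nat \<Rightarrow> nat \<Rightarrow> nat \<Rightarrow> 'v \<Rightarrow> nat"
  where "star_colouring v a b d k i j l m y =
    (if y = v then k else if y = a then i else if y = b then j else if y = d then l else m)"

locale subcubic_GHZ =
  fixes V :: "'v set" and E :: "'v set set" and ME :: "nat set" and ends :: "nat \<Rightarrow> 'v \<times> 'v"
    and c :: "nat \<Rightarrow> 'v \<Rightarrow> nat" and w :: "nat \<Rightarrow> complex"
  assumes graph: "simple_graph V E" and subcubic: "max_degree V E \<le> 3" and large: "4 < card V"
    and multigraph: "multigraph V ME ends" and skeleton: "skeleton ME ends = E"
    and GHZ: "GHZ V ME ends c w"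
begin

abbreviation M :: "'v \<Rightarrow> 'v \<Rightarrow> nat \<Rightarrow> nat \<Rightarrow> complex" where
  "M \<equiv> pair_weight ME ends c w"

abbreviation W :: "'v set \<Rightarrow> ('v \<Rightarrow> nat) \<Rightarrow> complex" where
  "W U vc \<equiv> induced_weight U ME ends c w vc"

lemma finite_V: "finite V"
  using graph by (simp add: simple_graph_def)

lemma card_neighbours: "v \<in> V \<Longrightarrow> card (neighbours E v) \<le> 3"
  using card_neighbours_le_max_degree[OF graph] subcubic by (meson order_trans)

lemma finite_neighbours: "finite (neighbours E v)"
  using neighbours_subset[OF graph] finite_V by (meson finite_Diff finite_subset)

lemma pair_weight_nonzero_imp_neighbour: "M v x p q \<noteq> 0 \<Longrightarrow> x \<in> neighbours E v"
  using pair_weight_nonzero_imp_skeleton skeleton by (auto simp: neighbours_def)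

lemma W_expand:
  assumes "U \<subseteq> V" "u \<in> U"
  shows "W U vc = (\<Sum>x\<in>U - {u}. M u x (vc u) (vc x) * W (U - {u, x}) vc)"
  using multigraph assms finite_V
  by (intro induced_weight_expand) (auto simp: multigraph_def intro: finite_subset)

lemma W_expand_neighbours:
  assumes v: "v \<in> V" and abd: "{a, b, d} \<subseteq> V - {v}" "distinct [a, b, d]"
    and nbrs: "neighbours E v \<subseteq> {a, b, d}"
  shows "W V vc = M v a (vc v) (vc a) * W (V - {v, a}) vc + M v b (vc v) (vc b) * W (V - {v, b}) vc
    + M v d (vc v) (vc d) * W (V - {v, d}) vc"
proof -
  let ?f = "\<lambda>x. M v x (vc v) (vc x) * W (V - {v, x}) vc"
  have "W V vc = (\<Sum>x\<in>V - {v}. ?f x)" by (rule W_expand[OF order_refl v])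
  also have "\<dots> = (\<Sum>x\<in>{a, b, d}. ?f x)"
  proof (rule sum.mono_neutral_right)
    show "\<forall>x\<in>V - {v} - {a, b, d}. ?f x = 0"
      using nbrs pair_weight_nonzero_imp_neighbour by (metis Diff_iff mult_eq_0_iff subsetD)
  qed (use finite_V abd in auto)
  also have "\<dots> = ?f a + ?f b + ?f d" using abd by (simp add: add.assoc)
  finally show ?thesis .
qed

lemma W_star_colouring_expand:
  assumes v: "v \<in> V" and abd: "{a, b, d} \<subseteq> V - {v}" "distinct [a, b, d]"
    and nbrs: "neighbours E v \<subseteq> {a, b, d}"
  shows "W V (star_colouring v a b d k i j l m)
    = M v a k i * W (V - {v, a}) (star_colouring v a b d j j j l m)
      + M v b k j * W (V - {v, b}) (star_colouring v a b d i i i l m)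
      + M v d k l * W (V - {v, d}) (star_colouring v a b d i i j i m)"
proof -
  have "W (V - {v, a}) (star_colouring v a b d k i j l m) = W (V - {v, a}) (star_colouring v a b d j j j l m)"
    "W (V - {v, b}) (star_colouring v a b d k i j l m) = W (V - {v, b}) (star_colouring v a b d i i i l m)"
    "W (V - {v, d}) (star_colouring v a b d k i j l m) = W (V - {v, d}) (star_colouring v a b d i i j i m)"
    by (rule induced_weight_cong, simp add: star_colouring_def)+
  moreover have "star_colouring v a b d k i j l m v = k" "star_colouring v a b d k i j l m a = i"
    "star_colouring v a b d k i j l m b = j" "star_colouring v a b d k i j l m d = l"
    using abd by (auto simp: star_colouring_def)
  ultimately show ?thesis
    using W_expand_neighbours[OF v abd nbrs, of "star_colouring v a b d k i j l m"] by simp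
qed

lemma W_monochromatic:
  assumes "\<forall>x\<in>V. vc x = k" "feasible V ME ends c (\<lambda>_. k)"
  shows "W V vc = 1"
proof -
  have "induced_matchings V ME ends c vc = induced_matchings V ME ends c (\<lambda>_. k)"
    by (rule induced_matchings_cong) (use assms(1) in simp)
  hence "feasible V ME ends c vc"
    using assms(2) feasible_iff_induced_matchings[OF multigraph] by simp
  moreover have "monochromatic V vc" using assms(1) by (simp add: monochromatic_def)
  ultimately show ?thesis
    using GHZ induced_weight_eq_vc_weight[OF multigraph] by (simp add: GHZ_def)
qed

lemma W_nonmonochromatic:
  assumes "x \<in> V" "y \<in> V" "vc x \<noteq> vc y"
  shows "W V vc = 0"
proof -
  have "\<not> monochromatic V vc" using assms by (auto simp: monochromatic_def)
  thus ?thesis using GHZ induced_weight_eq_vc_weight[OF multigraph] by (simp add: GHZ_def)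
qed

end

locale three_feasible_colours = subcubic_GHZ +
  fixes K :: "nat set"
  assumes card_K: "card K = 3" and feasible_K: "\<And>k. k \<in> K \<Longrightarrow> feasible V ME ends c (\<lambda>_. k)"
begin

lemma finite_K: "finite K"
  by (rule card_ge_0_finite) (simp add: card_K)

lemma W_K_colouring:
  assumes "vc ` V \<subseteq> K"
  shows "W V vc = (if monochromatic V vc then 1 else 0)"
proof (cases "monochromatic V vc")
  case True
  have "V \<noteq> {}" using large by auto
  then obtain x0 where x0: "x0 \<in> V" by blast
  have "W V vc = 1"
  proof (rule W_monochromatic)
    show "\<forall>x\<in>V. vc x = vc x0" using True x0 unfolding monochromatic_def by blast
    show "feasible V ME ends c (\<lambda>_. vc x0)" using feasible_K[of "vc x0"] assms x0 by blast
  qed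
  thus ?thesis using True by simp
next
  case False
  then obtain x y where "x \<in> V" "y \<in> V" "vc x \<noteq> vc y" by (auto simp: monochromatic_def)
  thus ?thesis using W_nonmonochromatic False by simp
qed

lemma W_star_colouring:
  assumes v: "v \<in> V" and others: "{a, b, d, r} \<subseteq> V - {v}" "distinct [a, b, d, r]"
    and colours: "{k, i, j, l, m} \<subseteq> K"
  shows "W V (star_colouring v a b d k i j l m) = (if k = i \<and> i = j \<and> j = l \<and> l = m then 1 else 0)"
proof -
  let ?col = "star_colouring v a b d k i j l m"
  have at: "?col v = k" "?col a = i" "?col b = j" "?col d = l" "?col r = m"
    using others by (auto simp: star_colouring_def)
  have "?col ` V \<subseteq> K" using colours by (auto simp: star_colouring_def)
  moreover have "monochromatic V ?col \<longleftrightarrow> k = i \<and> i = j \<and> j = l \<and> l = m"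
  proof
    assume "monochromatic V ?col"
    hence "?col v = ?col a" "?col a = ?col b" "?col b = ?col d" "?col d = ?col r"
      using v others(1) unfolding monochromatic_def by (meson Diff_subset insert_subset subset_trans)+
    thus "k = i \<and> i = j \<and> j = l \<and> l = m" unfolding at by blast
  qed (simp add: monochromatic_def star_colouring_def)
  ultimately show ?thesis using W_K_colouring by simp
qed

lemma pair_form_nonzero:
  assumes v: "v \<in> V" and others: "{a, b, d, r} \<subseteq> V - {v}" "distinct [a, b, d, r]"
    and nbrs: "neighbours E v \<subseteq> {a, b, d}"
    and t: "\<forall>k\<in>K. t k \<noteq> 0" and s: "\<forall>i\<in>K. s i \<noteq> 0"
  shows "(\<Sum>k\<in>K. \<Sum>i\<in>K. t k * s i * M v a k i) \<noteq> 0"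
proof
  assume zero: "(\<Sum>k\<in>K. \<Sum>i\<in>K. t k * s i * M v a k i) = 0"
  let ?col = "star_colouring v a b d"
  define \<beta> where "\<beta> j = (\<Sum>k\<in>K. t k * M v b k j)" for j
  define \<gamma> where "\<gamma> l = (\<Sum>k\<in>K. t k * M v d k l)" for l
  define F where "F l m = (\<Sum>i\<in>K. s i * W (V - {v, b}) (?col i i i l m))" for l m
  define G where "G j m = (\<Sum>i\<in>K. s i * W (V - {v, d}) (?col i i j i m))" for j m
  have abd: "{a, b, d} \<subseteq> V - {v}" "distinct [a, b, d]" using others by auto
  have "\<beta> j * F l m + \<gamma> l * G j m = (if j = l \<and> l = m then t j * s j else 0)"
    if jlm: "j \<in> K" "l \<in> K" "m \<in> K" for j l m
  proof -
    have "(\<Sum>k\<in>K. \<Sum>i\<in>K. t k * s i * W V (?col k i j l m))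
        = (\<Sum>k\<in>K. \<Sum>i\<in>K. t k * s i * M v a k i) * W (V - {v, a}) (?col j j j l m) + \<beta> j * F l m + \<gamma> l * G j m"
      unfolding W_star_colouring_expand[OF v abd nbrs] \<beta>_def \<gamma>_def F_def G_def
      by (rule double_sum_split3)
    hence "\<beta> j * F l m + \<gamma> l * G j m = (\<Sum>k\<in>K. \<Sum>i\<in>K. t k * s i * W V (?col k i j l m))"
      using zero by simp
    also have "\<dots> = (\<Sum>k\<in>K. \<Sum>i\<in>K. t k * s i * (if k = i \<and> i = j \<and> (j = l \<and> l = m) then 1 else 0))"
      using W_star_colouring[OF v others] jlm by (intro sum.cong refl) auto
    also have "\<dots> = (if j = l \<and> l = m then t j * s j else 0)"
      by (rule delta_double_sum[OF finite_K jlm(1)])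
    finally show ?thesis .
  qed
  thus False
    using diagonal_tensor_not_split[of K \<beta> F \<gamma> G "\<lambda>j. t j * s j"] finite_K card_K t s by auto
qed

lemma pair_weight_support_unique:
  assumes v: "v \<in> V" and colours: "{p, q, p', q'} \<subseteq> K"
    and nonzero: "M v x p q \<noteq> 0" "M v x p' q' \<noteq> 0"
  shows "p = p' \<and> q = q'"
proof (rule ccontr)
  assume "\<not> (p = p' \<and> q = q')"
  then obtain t s where ts: "\<forall>k\<in>K. t k \<noteq> 0" "\<forall>i\<in>K. s i \<noteq> 0"
    "(\<Sum>k\<in>K. \<Sum>i\<in>K. t k * s i * M v x k i) = 0"
    using bilinear_form_vanishes_on_torus[OF finite_K, of p q p' q' "M v x"] colours nonzero by auto
  have x: "x \<in> neighbours E v" using pair_weight_nonzero_imp_neighbour nonzero(1) .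
  hence xV: "x \<in> V - {v}" using neighbours_subset[OF graph] by blast
  have "card (V - {v, x}) = card V - 2" using v xV finite_V by (auto simp: card_Diff_subset)
  hence "3 \<le> card (V - {v, x})" using large by simp
  moreover have "neighbours E v - {x} \<subseteq> V - {v, x}" using neighbours_subset[OF graph] by blast
  moreover have "card (neighbours E v - {x}) \<le> 2"
    using card_neighbours[OF v] x finite_neighbours by (simp add: card_Diff_singleton)
  ultimately obtain b d r where bdr: "b \<in> V - {v, x}" "d \<in> V - {v, x}" "r \<in> V - {v, x}"
    "b \<noteq> d" "r \<noteq> b" "r \<noteq> d" "neighbours E v - {x} \<subseteq> {b, d}"
    using obtain_cover_pair[of "V - {v, x}" "neighbours E v - {x}"] finite_V by blast
  have "(\<Sum>k\<in>K. \<Sum>i\<in>K. t k * s i * M v x k i) \<noteq> 0"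
    by (rule pair_form_nonzero[OF v _ _ _ ts(1,2), of x b d r]) (use xV bdr in auto)
  thus False using ts(3) by contradiction
qed

lemma monochromatic_pair_exists:
  assumes v: "v \<in> V" and k: "k \<in> K"
  shows "\<exists>x\<in>V - {v}. M v x k k \<noteq> 0"
proof (rule ccontr)
  assume "\<not> (\<exists>x\<in>V - {v}. M v x k k \<noteq> 0)"
  hence "W V (\<lambda>_. k) = 0" by (simp add: W_expand[OF order_refl v])
  moreover have "W V (\<lambda>_. k) = 1" by (rule W_monochromatic[of _ k]) (simp_all add: feasible_K[OF k])
  ultimately show False by simp
qed

definition partner where
  "partner k v = (SOME x. x \<in> V - {v} \<and> M v x k k \<noteq> 0)"

lemma partner:
  assumes "k \<in> K" "v \<in> V"
  shows "partner k v \<in> V - {v} \<and> M v (partner k v) k k \<noteq> 0"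
proof -
  have "\<exists>x. x \<in> V - {v} \<and> M v x k k \<noteq> 0" using monochromatic_pair_exists[OF assms(2,1)] by blast
  thus ?thesis unfolding partner_def by (rule someI_ex)
qed

lemma pair_weight_nonzero_imp_partner:
  assumes v: "v \<in> V" and pq: "p \<in> K" "q \<in> K" and nonzero: "M v x p q \<noteq> 0"
  shows "p = q \<and> x = partner p v"
proof -
  have "inj_on (\<lambda>k. partner k v) K"
  proof (rule inj_onI)
    fix k k' assume k: "k \<in> K" "k' \<in> K" and eq: "partner k v = partner k' v"
    have "M v (partner k v) k k \<noteq> 0" "M v (partner k v) k' k' \<noteq> 0"
      using partner[OF k(1) v] partner[OF k(2) v] eq by simp_all
    thus "k = k'" using pair_weight_support_unique[OF v] k by blast
  qed
  hence "card ((\<lambda>k. partner k v) ` K) = 3" using card_K by (simp add: card_image)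
  moreover have "(\<lambda>k. partner k v) ` K \<subseteq> neighbours E v"
    using partner[OF _ v] pair_weight_nonzero_imp_neighbour by blast
  ultimately have "(\<lambda>k. partner k v) ` K = neighbours E v"
    using card_neighbours[OF v] finite_neighbours by (metis card_seteq)
  moreover have "x \<in> neighbours E v" using pair_weight_nonzero_imp_neighbour nonzero .
  ultimately obtain k where k: "k \<in> K" "x = partner k v" by blast
  hence "M v x k k \<noteq> 0" using partner[OF k(1) v] by simp
  hence "p = k \<and> q = k" by (intro pair_weight_support_unique[OF v]) (use pq k nonzero in auto)
  thus ?thesis using k(2) by simp
qed

lemma partner_involution: "k \<in> K \<Longrightarrow> fixfree_involution V (partner k)"
  unfolding fixfree_involution_def
proof (intro ballI conjI)
  fix v assume k: "k \<in> K" and v: "v \<in> V"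
  show "partner k v \<in> V" "partner k v \<noteq> v" using partner[OF k v] by auto
  have "M (partner k v) v k k \<noteq> 0" using partner[OF k v] pair_weight_commute by metis
  thus "partner k (partner k v) = v"
    using pair_weight_nonzero_imp_partner[OF _ k k] partner[OF k v] by (metis Diff_iff)
qed

lemma partner_closed_Diff_pair:
  assumes colours: "vc ` V \<subseteq> K" and compatible: "\<And>x. x \<in> V \<Longrightarrow> vc (partner (vc x) x) = vc x"
    and U: "U \<subseteq> V" "\<And>x. x \<in> U \<Longrightarrow> partner (vc x) x \<in> U" and u: "u \<in> U"
    and y: "y \<in> U - {u, partner (vc u) u}"
  shows "partner (vc y) y \<in> U - {u, partner (vc u) u}"
proof -
  have involution: "partner (vc x) (partner (vc x) x) = x" if "x \<in> U" for x
    using fixfree_involutionD(3)[OF partner_involution] colours U(1) that by blast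
  have "partner (vc y) y \<noteq> u"
  proof
    assume "partner (vc y) y = u"
    hence "vc u = vc y" "partner (vc u) u = y" using compatible involution U(1) y by fastforce+
    thus False using y by simp
  qed
  moreover have "partner (vc y) y \<noteq> partner (vc u) u"
  proof
    assume "partner (vc y) y = partner (vc u) u"
    hence "vc y = vc u" using compatible U(1) u y by (metis DiffD1 subsetD)
    thus False using involution u y \<open>partner (vc y) y = partner (vc u) u\<close> by (metis DiffD1 DiffD2 insertI1)
  qed
  ultimately show ?thesis using U(2) y by blast
qed

lemma W_nonzero:
  assumes colours: "vc ` V \<subseteq> K" and compatible: "\<And>x. x \<in> V \<Longrightarrow> vc (partner (vc x) x) = vc x"
  shows "U \<subseteq> V \<Longrightarrow> (\<And>x. x \<in> U \<Longrightarrow> partner (vc x) x \<in> U) \<Longrightarrow> W U vc \<noteq> 0"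
proof (induction "card U" arbitrary: U rule: less_induct)
  case less
  show ?case
  proof (cases "U = {}")
    case False
    then obtain u where u: "u \<in> U" by blast
    define p where "p = partner (vc u) u"
    have uV: "u \<in> V" using less.prems(1) u by blast
    have vc_u: "vc u \<in> K" using colours uV by blast
    have p: "p \<in> U - {u}" "M u p (vc u) (vc u) \<noteq> 0" "vc p = vc u"
      using less.prems(2)[OF u] partner[OF vc_u uV] compatible[OF uV] by (auto simp: p_def)
    have finU: "finite U" using finite_subset[OF less.prems(1) finite_V] .
    have "W U vc = (\<Sum>x\<in>U - {u}. M u x (vc u) (vc x) * W (U - {u, x}) vc)"
      by (rule W_expand[OF less.prems(1) u])
    also have "\<dots> = (\<Sum>x\<in>{p}. M u x (vc u) (vc x) * W (U - {u, x}) vc)"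
    proof (rule sum.mono_neutral_right)
      show "\<forall>x\<in>U - {u} - {p}. M u x (vc u) (vc x) * W (U - {u, x}) vc = 0"
      proof
        fix x assume x: "x \<in> U - {u} - {p}"
        hence "M u x (vc u) (vc x) = 0"
          using pair_weight_nonzero_imp_partner[OF uV vc_u, of "vc x" x] colours less.prems(1)
          by (auto simp: p_def)
        thus "M u x (vc u) (vc x) * W (U - {u, x}) vc = 0" by simp
      qed
    qed (use finU p in auto)
    finally have "W U vc = M u p (vc u) (vc u) * W (U - {u, p}) vc" using p by simp
    moreover have "W (U - {u, p}) vc \<noteq> 0"
    proof (rule less.hyps)
      show "card (U - {u, p}) < card U" using u finU by (intro psubset_card_mono) auto
      show "U - {u, p} \<subseteq> V" using less.prems(1) by blast
      show "partner (vc y) y \<in> U - {u, p}" if "y \<in> U - {u, p}" for y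
        using partner_closed_Diff_pair[OF colours compatible less.prems u] that by (simp add: p_def)
    qed
    ultimately show ?thesis using p by simp
  qed (simp add: induced_weight_empty)
qed

lemma no_three_feasible_colours: False
proof -
  obtain k1 k2 k3 where K: "K = {k1, k2, k3}" and k: "distinct [k1, k2, k3]"
    using card_K unfolding card_3_iff by auto
  have "fixfree_involution V (partner k1)" "fixfree_involution V (partner k2)"
    "fixfree_involution V (partner k3)" using partner_involution K by simp_all
  then obtain A B C where part: "invariant_partition V (partner k1) (partner k2) (partner k3) A B C"
    using invariant_partition_exists[OF finite_V large] by blast
  let ?vc = "partition_colouring A B k1 k2 k3"
  have colours: "?vc ` V \<subseteq> K" using K by (auto simp: partition_colouring_def)
  have "W V ?vc \<noteq> 0"
  proof (rule W_nonzero[OF colours partition_colouring_compatible[OF part k] order_refl])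
    show "partner (?vc x) x \<in> V" if "x \<in> V" for x
      using fixfree_involutionD(1)[OF partner_involution] colours that by blast
  qed
  moreover have "\<not> monochromatic V ?vc" by (rule partition_colouring_not_monochromatic[OF part k])
  ultimately show False using W_K_colouring[OF colours] by simp
qed

end

lemma dimension_le_2:
  assumes "simple_graph V E" "max_degree V E \<le> 3" "4 < card V" "multigraph V ME ends"
    "skeleton ME ends = E" "GHZ V ME ends c w"
  shows "dimension V ME ends c \<le> 2"
proof -
  define colours where "colours = {k. feasible V ME ends c (\<lambda>_. k)}"
  have "finite colours \<and> card colours \<le> 2"
  proof (rule ccontr)
    assume "\<not> (finite colours \<and> card colours \<le> 2)"
    hence "\<exists>K. K \<subseteq> colours \<and> card K = 3"
    proof (cases "finite colours")
      case True
      hence "3 \<le> card colours" using \<open>\<not> (finite colours \<and> card colours \<le> 2)\<close> by simp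
      thus ?thesis by (meson obtain_subset_with_card_n)
    qed (meson infinite_arbitrarily_large)
    then obtain K where "K \<subseteq> colours" "card K = 3" by blast
    hence "three_feasible_colours V E ME ends c w K"
      using assms by unfold_locales (auto simp: colours_def)
    thus False by (rule three_feasible_colours.no_three_feasible_colours)
  qed
  hence "dimension V ME ends c = enat (card colours)"
    by (simp add: dimension_def colours_def)
  thus ?thesis using \<open>finite colours \<and> card colours \<le> 2\<close> by (simp add: numeral_eq_enat)
qed

theorem theorem5:
  fixes V :: "'v set" and E :: "'v set set"
  assumes "simple_graph V E"
    and "max_degree V E = 3"
    and "card V > 4"
  shows "matching_index V E \<le> 2"
  unfolding matching_index_def
proof (rule SUP_least)
  fix x assume "x \<in> {(ME, ends, c, w). multigraph V ME ends \<and> skeleton ME ends = E \<and> GHZ V ME ends c w}"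
  then obtain ME ends c w where x: "x = (ME, ends, c, w)" "multigraph V ME ends" "skeleton ME ends = E"
    "GHZ V ME ends c w" by auto
  show "(case x of (ME, ends, c, w) \<Rightarrow> dimension V ME ends c) \<le> 2"
    using dimension_le_2[OF assms(1) _ assms(3) x(2-4)] assms(2) x(1) by simp
qed

end
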